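(* Let $d\ge 3$. In every model of $\mathsf{SR}$, for any inertial observers $m$ and $k$, the worldview transformation $\mathsf{w}_{mk}$ is a Poincaré transformation of $Q^d$.
   Context: Language: two-sorted first-order language with sorts $B$ (bodies), $Q$ (quantities), unary $\mathsf{IOb}$ on $B$, binary $\mathsf{Ph}$ on $B$, operations $+,\cdot$ and relation $\le$ on $Q$, and $(d+2)$-ary $\mathsf{W}$ (first two arguments of sort $B$, rest of sort $Q$). $\mathsf{time}(\bar x,\bar y)=x_1-y_1$, $\mathsf{space}^2(\bar x,\bar y)=\sum_{i=2}^d(x_i-y_i)^2$. Write $\mathsf{ev}_m(\bar x)=\mathsf{ev}_k(\bar y)$ for $\forall b[\mathsf{W}(m,b,\bar x)\leftrightarrow\mathsf{W}(k,b,\bar y)]$. $\mathsf{SR}=\mathsf{SPR}^++\mathsf{AxLight}+\mathsf{AxOField}+\mathsf{AxEv}+\mathsf{AxSelf}+\mathsf{AxSymD}$, where: $\mathsf{SPR}^+$: for every formula $\varphi(h,\bar x)$ with at most one free variable $h$ of sort $B$, $\forall m k\bar x[\mathsf{IOb}(m)\land\mathsf{IOb}(k)\to(\varphi(m,\bar x)\leftrightarrow\varphi(k,\bar x))]$. $\mathsf{AxLight}$: $\exists m\,c\,[\mathsf{IOb}(m)\land c>0\land\forall\bar x\bar y\,(\exists p b[\mathsf{Ph}(p,b)\land\mathsf{W}(m,p,\bar x)\land\mathsf{W}(m,p,\bar y)]\leftrightarrow \mathsf{space}^2(\bar x,\bar y)=c^2\mathsf{time}(\bar x,\bar y)^2)]$.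 $\mathsf{AxOField}$: $\langle Q,+,\cdot,\le\rangle$ is an ordered field. $\mathsf{AxEv}$: $\mathsf{IOb}(m)\land\mathsf{IOb}(k)\to\exists\bar y\,\mathsf{ev}_m(\bar x)=\mathsf{ev}_k(\bar y)$ (for all $m,k,\bar x$). $\mathsf{AxSelf}$: $\mathsf{IOb}(m)\to\forall\bar x[\mathsf{W}(m,m,\bar x)\leftrightarrow x_2=\dots=x_d=0]$. $\mathsf{AxSymD}$: (i) if $\mathsf{IOb}(m),\mathsf{IOb}(k)$, $x_1=y_1$, $x'_1=y'_1$, $\mathsf{ev}_m(\bar x)=\mathsf{ev}_k(\bar x')$ and $\mathsf{ev}_m(\bar y)=\mathsf{ev}_k(\bar y')$, then $\mathsf{space}^2(\bar x,\bar y)=\mathsf{space}^2(\bar x',\bar y')$; (ii) $\mathsf{IOb}(m)\to\exists pb[\mathsf{Ph}(p,b)\land\mathsf{W}(m,p,0,\dots,0)\land\mathsf{W}(m,p,1,1,0,\dots,0)]$. Worldview transformation: $\mathsf{w}_{mk}=\{\langle\bar x,\bar y\rangle\in Q^d\times Q^d:\forall b[\mathsf{W}(m,b,\bar x)\leftrightarrow\mathsf{W}(k,b,\bar y)]\}$. A Poincaré transformation is an affine bijection $P:Q^d\to Q^d$ such that $\mathsf{time}(\bar x,\bar y)^2-\mathsf{space}^2(\bar x,\bar y)=\mathsf{time}(P\bar x,P\bar y)^2-\mathsf{space}^2(P\bar x,P\bar y)$ for all $\bar x,\bar y$. *)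

theory Defs
  imports Main
begin

(* Coordinates: a point of Q^d is a list of length d; index 0 is time,
   indices 1..d-1 are space coordinates (paper's x_1 .. x_d). *)

datatype qterm = QVar nat | QAdd qterm qterm | QMul qterm qterm

(* Formulas. Body variables and quantity variables are separate nat-indexed
   families. Neg/Conj/ExB/ExQ form a complete basis; others are definable. *)
datatype form =
    FFalse
  | BEq nat nat
  | QEq qterm qterm
  | QLe qterm qterm
  | IObA nat
  | PhA nat nat
  | WA nat nat "qterm list"
  | Neg form
  | Conj form form
  | ExB nat form
  | ExQ nat form

primrec evalq :: "(nat \<Rightarrow> 'q::{plus,times}) \<Rightarrow> qterm \<Rightarrow> 'q" where
  "evalq e (QVar n) = e n"
| "evalq e (QAdd s t) = evalq e s + evalq e t"
| "evalq e (QMul s t) = evalq e s * evalq e t"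

primrec sat :: "('b \<Rightarrow> bool) \<Rightarrow> ('b \<Rightarrow> 'b \<Rightarrow> bool) \<Rightarrow> ('b \<Rightarrow> 'b \<Rightarrow> 'q list \<Rightarrow> bool)
    \<Rightarrow> (nat \<Rightarrow> 'b) \<Rightarrow> (nat \<Rightarrow> 'q::{plus,times,ord}) \<Rightarrow> form \<Rightarrow> bool" where
  "sat IOb Ph W eb eq FFalse = False"
| "sat IOb Ph W eb eq (BEq i j) = (eb i = eb j)"
| "sat IOb Ph W eb eq (QEq s t) = (evalq eq s = evalq eq t)"
| "sat IOb Ph W eb eq (QLe s t) = (evalq eq s \<le> evalq eq t)"
| "sat IOb Ph W eb eq (IObA i) = IOb (eb i)"
| "sat IOb Ph W eb eq (PhA i j) = Ph (eb i) (eb j)"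
| "sat IOb Ph W eb eq (WA i j ts) = W (eb i) (eb j) (map (evalq eq) ts)"
| "sat IOb Ph W eb eq (Neg f) = (\<not> sat IOb Ph W eb eq f)"
| "sat IOb Ph W eb eq (Conj f g) = (sat IOb Ph W eb eq f \<and> sat IOb Ph W eb eq g)"
| "sat IOb Ph W eb eq (ExB n f) = (\<exists>b. sat IOb Ph W (eb(n := b)) eq f)"
| "sat IOb Ph W eb eq (ExQ n f) = (\<exists>q. sat IOb Ph W eb (eq(n := q)) f)"

primrec wf_form :: "nat \<Rightarrow> form \<Rightarrow> bool" where
  "wf_form d FFalse = True"
| "wf_form d (BEq i j) = True"
| "wf_form d (QEq s t) = True"
| "wf_form d (QLe s t) = True"
| "wf_form d (IObA i) = True"
| "wf_form d (PhA i j) = True"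
| "wf_form d (WA i j ts) = (length ts = d)"
| "wf_form d (Neg f) = wf_form d f"
| "wf_form d (Conj f g) = (wf_form d f \<and> wf_form d g)"
| "wf_form d (ExB n f) = wf_form d f"
| "wf_form d (ExQ n f) = wf_form d f"

primrec fvB :: "form \<Rightarrow> nat set" where
  "fvB FFalse = {}"
| "fvB (BEq i j) = {i, j}"
| "fvB (QEq s t) = {}"
| "fvB (QLe s t) = {}"
| "fvB (IObA i) = {i}"
| "fvB (PhA i j) = {i, j}"
| "fvB (WA i j ts) = {i, j}"
| "fvB (Neg f) = fvB f"
| "fvB (Conj f g) = fvB f \<union> fvB g"
| "fvB (ExB n f) = fvB f - {n}"
| "fvB (ExQ n f) = fvB f"

definition time :: "'q::ab_group_add list \<Rightarrow> 'q list \<Rightarrow> 'q" where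
  "time x y = x ! 0 - y ! 0"

definition space2 :: "nat \<Rightarrow> 'q::comm_ring_1 list \<Rightarrow> 'q list \<Rightarrow> 'q" where
  "space2 d x y = (\<Sum>i\<in>{1..<d}. (x ! i - y ! i)^2)"

definition ev_eq :: "('b \<Rightarrow> 'b \<Rightarrow> 'q list \<Rightarrow> bool) \<Rightarrow> 'b \<Rightarrow> 'q list \<Rightarrow> 'b \<Rightarrow> 'q list \<Rightarrow> bool" where
  "ev_eq W m x k y = (\<forall>b. W m b x \<longleftrightarrow> W k b y)"

definition SPR_plus :: "nat \<Rightarrow> ('b \<Rightarrow> bool) \<Rightarrow> ('b \<Rightarrow> 'b \<Rightarrow> bool)
    \<Rightarrow> ('b \<Rightarrow> 'b \<Rightarrow> 'q::linordered_field list \<Rightarrow> bool) \<Rightarrow> bool" where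
  "SPR_plus d IOb Ph W =
    (\<forall>\<phi> h. wf_form d \<phi> \<and> fvB \<phi> \<subseteq> {h} \<longrightarrow>
       (\<forall>eb eq m k. IOb m \<and> IOb k \<longrightarrow>
          (sat IOb Ph W (eb(h := m)) eq \<phi> \<longleftrightarrow> sat IOb Ph W (eb(h := k)) eq \<phi>)))"

definition AxLight :: "nat \<Rightarrow> ('b \<Rightarrow> bool) \<Rightarrow> ('b \<Rightarrow> 'b \<Rightarrow> bool)
    \<Rightarrow> ('b \<Rightarrow> 'b \<Rightarrow> 'q::linordered_field list \<Rightarrow> bool) \<Rightarrow> bool" where
  "AxLight d IOb Ph W =
    (\<exists>m c. IOb m \<and> c > 0 \<and>
       (\<forall>x y. length x = d \<and> length y = d \<longrightarrow>
          ((\<exists>p b. Ph p b \<and> W m p x \<and> W m p y) \<longleftrightarrow> space2 d x y = c^2 * (time x y)^2)))"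

definition AxEv :: "nat \<Rightarrow> ('b \<Rightarrow> bool) \<Rightarrow> ('b \<Rightarrow> 'b \<Rightarrow> 'q list \<Rightarrow> bool) \<Rightarrow> bool" where
  "AxEv d IOb W =
    (\<forall>m k x. IOb m \<and> IOb k \<and> length x = d \<longrightarrow>
       (\<exists>y. length y = d \<and> ev_eq W m x k y))"

definition AxSelf :: "nat \<Rightarrow> ('b \<Rightarrow> bool) \<Rightarrow> ('b \<Rightarrow> 'b \<Rightarrow> 'q::zero list \<Rightarrow> bool) \<Rightarrow> bool" where
  "AxSelf d IOb W =
    (\<forall>m. IOb m \<longrightarrow> (\<forall>x. length x = d \<longrightarrow> (W m m x \<longleftrightarrow> (\<forall>i\<in>{1..<d}. x ! i = 0))))"

definition AxSymD :: "nat \<Rightarrow> ('b \<Rightarrow> bool) \<Rightarrow> ('b \<Rightarrow> 'b \<Rightarrow> bool)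
    \<Rightarrow> ('b \<Rightarrow> 'b \<Rightarrow> 'q::linordered_field list \<Rightarrow> bool) \<Rightarrow> bool" where
  "AxSymD d IOb Ph W =
    ((\<forall>m k x y x' y'. IOb m \<and> IOb k \<and>
        length x = d \<and> length y = d \<and> length x' = d \<and> length y' = d \<and>
        x ! 0 = y ! 0 \<and> x' ! 0 = y' ! 0 \<and>
        ev_eq W m x k x' \<and> ev_eq W m y k y' \<longrightarrow> space2 d x y = space2 d x' y')
     \<and> (\<forall>m. IOb m \<longrightarrow> (\<exists>p b. Ph p b \<and> W m p (replicate d 0)
                                   \<and> W m p (1 # 1 # replicate (d - 2) 0))))"

(* AxOField is captured by the type class linordered_field on 'q. *)
definition SR :: "nat \<Rightarrow> ('b \<Rightarrow> bool) \<Rightarrow> ('b \<Rightarrow> 'b \<Rightarrow> bool)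
    \<Rightarrow> ('b \<Rightarrow> 'b \<Rightarrow> 'q::linordered_field list \<Rightarrow> bool) \<Rightarrow> bool" where
  "SR d IOb Ph W = (SPR_plus d IOb Ph W \<and> AxLight d IOb Ph W \<and> AxEv d IOb W
                    \<and> AxSelf d IOb W \<and> AxSymD d IOb Ph W)"

definition wvt :: "nat \<Rightarrow> ('b \<Rightarrow> 'b \<Rightarrow> 'q list \<Rightarrow> bool) \<Rightarrow> 'b \<Rightarrow> 'b \<Rightarrow> ('q list \<times> 'q list) set" where
  "wvt d W m k = {(x, y). length x = d \<and> length y = d \<and> ev_eq W m x k y}"

definition affine_map :: "nat \<Rightarrow> ('q::comm_ring_1 list \<Rightarrow> 'q list) \<Rightarrow> bool" where
  "affine_map d P =
    (\<exists>(A :: nat \<Rightarrow> nat \<Rightarrow> 'q) (c :: nat \<Rightarrow> 'q). \<forall>x. length x = d \<longrightarrow>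
        P x = map (\<lambda>i. c i + (\<Sum>j<d. A i j * x ! j)) [0..<d])"

definition poincare :: "nat \<Rightarrow> ('q::linordered_field list \<Rightarrow> 'q list) \<Rightarrow> bool" where
  "poincare d P =
    (affine_map d P \<and> bij_betw P {x. length x = d} {x. length x = d} \<and>
     (\<forall>x y. length x = d \<and> length y = d \<longrightarrow>
        (time x y)^2 - space2 d x y = (time (P x) (P y))^2 - space2 d (P x) (P y)))"

end

theory Submission
  imports Defs "HOL.Modules" "HOL-Library.Function_Algebras"
begin

(* A point of Q^d is represented by a function nat => 'q vanishing from index d on (the
   set vecs), so that Q^d is an additive group carrying the Minkowski form
   mform x y = x_0 y_0 - (x_1 y_1 + ... + x_{d-1} y_{d-1}) and its quadratic form mquad.
   1. Light-cone geometry: orthogonal lightlike vectors are parallel, and a point that is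
      lightlike-separated from two distinct lightlike-separated points lies on their line.
      For d >= 3 the vectors e_0 +- e_j span Q^d even after discarding any one of them.
   2. An Alexandrov-Zeeman type theorem (locale light_cone_map): a bijection F of Q^d,
      d >= 3, preserving lightlike separation in both directions and preserving mquad on
      pairs of simultaneous events with simultaneous images, is affine with a linear part
      preserving mquad.  F respects lightlike parallelograms, so its increments give an
      additive map lin; on every light ray lin acts through an additive field map; these
      maps coincide and satisfy sigma(1/x) sigma(x) = 1, so by Hua's identity they form a
      field endomorphism sigma, and the simultaneity hypothesis forces sigma = id and
      makes lin an isometry.
   3. AxSymD(ii) forces the speed of light c = 1 in AxLight; the resulting light axiom is a
      formula in one free body variable, which SPR+ transfers to every inertial observer.
   4. For inertial m, k light signals separate coordinate points, so w_mk is the graph of a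
      bijection satisfying the hypotheses of step 2; reading it back in lists gives the
      Poincare transformation. *)

lemma sum_fun_apply: "finite A \<Longrightarrow> (\<Sum>i\<in>A. f i) x = (\<Sum>i\<in>A. f i x)"
  by (induction A rule: finite_induct) auto

section \<open>Additive maps of a field\<close>

lemma additive_half:
  fixes f :: "'q::field_char_0 \<Rightarrow> 'q"
  assumes "additive f"
  shows "f (x / 2) = f x / 2"
  using additive.add[OF assms, of "x / 2" "x / 2"] by simp

(* Hua's identity: an additive map with f 1 = 1 and f (1/x) f x = 1 is multiplicative. *)
lemma hua_multiplicative:
  fixes f :: "'q::field_char_0 \<Rightarrow> 'q"
  assumes add: "additive f" and one: "f 1 = 1" and inv: "\<And>x. x \<noteq> 0 \<Longrightarrow> f (1 / x) * f x = 1"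
  shows "f (x * y) = f x * f y"
proof -
  have nonzero: "f z \<noteq> 0" if "z \<noteq> 0" for z
    using inv[OF that] by auto
  have f_inverse: "f (1 / z) = 1 / f z" if "z \<noteq> 0" for z
    using inv[OF that] nonzero[OF that] by (simp add: eq_divide_eq)
  have square: "f (z * z) = f z * f z" for z
  proof (cases "z = 0 \<or> z = 1")
    case True then show ?thesis using additive.zero[OF add] one by auto
  next
    case False
    then have z0: "z \<noteq> 0" and z1: "z - 1 \<noteq> 0" and zz: "z * z - z \<noteq> 0" by (auto simp: algebra_simps)
    have e: "1 / (z * z - z) = 1 / (z - 1) - 1 / z" using z0 z1 by (simp add: field_simps)
    have fz1: "f (z - 1) = f z - 1" using additive.diff[OF add] one by simp
    have "1 / f (z * z - z) = 1 / (f z - 1) - 1 / f z"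
      using arg_cong[OF e, of f] f_inverse[OF zz] f_inverse[OF z0] f_inverse[OF z1] additive.diff[OF add] fz1
      by simp
    moreover have "f z - 1 \<noteq> 0" using nonzero[OF z1] fz1 by simp
    ultimately have "f (z * z - z) = f z * f z - f z"
      using nonzero[OF z0] nonzero[OF zz] by (simp add: field_simps)
    then show ?thesis using additive.diff[OF add, of "z * z" z] by simp
  qed
  have "f ((x + y) * (x + y)) = f (x * x) + f (y * y) + 2 * f (x * y)"
    using additive.add[OF add] additive_half[OF add, of "2 * (x * y)"] by (simp add: algebra_simps)
  then show ?thesis using square[of "x + y"] square[of x] square[of y] additive.add[OF add]
    by (simp add: algebra_simps)
qed

(* If additive surjections phi, psi map the hyperbola t (1 - s) = k exactly onto the conic
   A + 2 c psi t - 2 e phi s - 2 b phi s psi t = 0, then psi (1/x) phi x = 1.  Comparing the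
   points (s, t) = (s, 0), (1, t), (0, k) and (1 - k x, 1/x) determines the conic. *)
lemma inverse_from_hyperbola:
  fixes \<phi> \<psi> :: "'q::field_char_0 \<Rightarrow> 'q"
  assumes add: "additive \<phi>" "additive \<psi>" and one: "\<phi> 1 = 1"
    and onto: "\<And>c. \<exists>s. \<phi> s = c" "\<And>c. \<exists>t. \<psi> t = c"
    and k: "k \<noteq> 0" "\<psi> k = k" "\<And>x. \<phi> (k * x) = k * \<phi> x"
    and conic: "\<And>s t. t * (1 - s) = k \<longleftrightarrow> A + 2 * \<psi> t * c - 2 * \<phi> s * e - 2 * \<phi> s * \<psi> t * b = 0"
    and x: "x \<noteq> 0"
  shows "\<psi> (1 / x) * \<phi> x = 1"
proof -
  have zero: "\<phi> 0 = 0" "\<psi> 0 = 0" using additive.zero[OF add(1)] additive.zero[OF add(2)] .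
  have e: "e = 0"
  proof (rule ccontr)
    assume "e \<noteq> 0"
    obtain s where "\<phi> s = A / (2 * e)" using onto(1) by blast
    then have "0 * (1 - s) = k" using conic[of 0 s] \<open>e \<noteq> 0\<close> zero by simp
    then show False using k by simp
  qed
  have cb: "c = b"
  proof (rule ccontr)
    assume "c \<noteq> b"
    obtain t where "\<psi> t = - A / (2 * (c - b))" using onto(2) by blast
    then have "t * (1 - 1) = k" using conic[of t 1] \<open>c \<noteq> b\<close> e one by (simp add: field_simps)
    then show False using k by simp
  qed
  have A: "A = - 2 * k * c" using conic[of k 0] k zero by (simp add: eq_neg_iff_add_eq_0)
  have c: "c \<noteq> 0"
  proof
    assume "c = 0"
    then have "0 * (1 - 0) = k" using conic[of 0 0] A zero by simp
    then show False using k by simp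
  qed
  have "A + 2 * \<psi> (1 / x) * c - 2 * \<phi> (1 - k * x) * e - 2 * \<phi> (1 - k * x) * \<psi> (1 / x) * b = 0"
    using conic[of "1 / x" "1 - k * x"] x by simp
  moreover have "\<phi> (1 - k * x) = 1 - k * \<phi> x" using additive.diff[OF add(1)] one k(3) by simp
  ultimately have "- 2 * k * c + 2 * \<psi> (1 / x) * c - 2 * (1 - k * \<phi> x) * \<psi> (1 / x) * c = 0"
    using e cb A by simp
  then have "2 * k * c * (\<psi> (1 / x) * \<phi> x - 1) = 0" by (simp add: algebra_simps)
  then show ?thesis using k c by simp
qed
section \<open>Minkowski space over an ordered field\<close>

locale minkowski =
  fixes d :: nat
begin

definition vecs :: "(nat \<Rightarrow> 'q::linordered_field) set" where
  "vecs = {x. \<forall>i\<ge>d. x i = 0}"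

definition smul :: "'q::linordered_field \<Rightarrow> (nat \<Rightarrow> 'q) \<Rightarrow> nat \<Rightarrow> 'q" where
  "smul t x = (\<lambda>i. t * x i)"

definition mform :: "(nat \<Rightarrow> 'q::linordered_field) \<Rightarrow> (nat \<Rightarrow> 'q) \<Rightarrow> 'q" where
  "mform x y = x 0 * y 0 - (\<Sum>i\<in>{1..<d}. x i * y i)"

definition mquad :: "(nat \<Rightarrow> 'q::linordered_field) \<Rightarrow> 'q" where
  "mquad x = mform x x"

definition basis :: "nat \<Rightarrow> nat \<Rightarrow> 'q::linordered_field" where
  "basis j = (\<lambda>i. if i = j then 1 else 0)"

definition lightvec :: "nat \<Rightarrow> 'q::linordered_field \<Rightarrow> nat \<Rightarrow> 'q" where
  "lightvec j s = basis 0 + smul s (basis j)"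

lemma smul_apply [simp]: "smul t x i = t * x i" by (simp add: smul_def)
lemma basis_apply [simp]: "basis j i = (if i = j then 1 else 0)" by (simp add: basis_def)

lemma vecs_add [simp, intro]: "x \<in> vecs \<Longrightarrow> y \<in> vecs \<Longrightarrow> x + y \<in> vecs" by (simp add: vecs_def)
lemma vecs_diff [simp, intro]: "x \<in> vecs \<Longrightarrow> y \<in> vecs \<Longrightarrow> x - y \<in> vecs" by (simp add: vecs_def)
lemma vecs_smul [simp, intro]: "x \<in> vecs \<Longrightarrow> smul t x \<in> vecs" by (simp add: vecs_def)
lemma vecs_zero [simp, intro]: "0 \<in> vecs" by (simp add: vecs_def)
lemma vecs_basis [simp, intro]: "j < d \<Longrightarrow> basis j \<in> vecs" by (simp add: vecs_def)
lemma vecs_lightvec [simp, intro]: "j < d \<Longrightarrow> lightvec j s \<in> vecs" by (simp add: lightvec_def)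
lemma vecs_sum [intro]: "(\<And>i. i \<in> A \<Longrightarrow> f i \<in> vecs) \<Longrightarrow> sum f A \<in> vecs"
  by (induction A rule: infinite_finite_induct) auto

lemma vecs_eqI: "x \<in> vecs \<Longrightarrow> y \<in> vecs \<Longrightarrow> (\<And>i. i < d \<Longrightarrow> x i = y i) \<Longrightarrow> x = y"
proof (rule ext)
  fix i assume "x \<in> vecs" "y \<in> vecs" "\<And>i. i < d \<Longrightarrow> x i = y i"
  then show "x i = y i" by (cases "i < d") (auto simp: vecs_def)
qed

lemma smul_zero [simp]: "smul 0 x = 0" by (simp add: smul_def zero_fun_def)
lemma smul_one [simp]: "smul 1 x = x" by (simp add: smul_def)
lemma smul_zero_right [simp]: "smul t 0 = 0" by (simp add: smul_def zero_fun_def)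
lemma smul_mult: "smul (s * t) x = smul s (smul t x)" by (simp add: smul_def mult.assoc)
lemma smul_add_left: "smul (s + t) x = smul s x + smul t x" by (rule ext) (simp add: algebra_simps)
lemma smul_add_right: "smul t (x + y) = smul t x + smul t y" by (rule ext) (simp add: algebra_simps)
lemma smul_diff_left: "smul (s - t) x = smul s x - smul t x" by (rule ext) (simp add: algebra_simps)
lemma smul_diff_right: "smul t (x - y) = smul t x - smul t y" by (rule ext) (simp add: algebra_simps)
lemmas smul_simps = smul_mult smul_add_left smul_add_right smul_diff_left smul_diff_right

lemma smul_cancel: "x \<noteq> 0 \<Longrightarrow> smul a x = smul b x \<Longrightarrow> a = b"
proof -
  assume "x \<noteq> 0" "smul a x = smul b x"
  then obtain i where "x i \<noteq> 0" "a * x i = b * x i" by (auto simp: fun_eq_iff)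
  then show "a = b" by simp
qed

lemma basis_decomp: "x \<in> vecs \<Longrightarrow> x = (\<Sum>i<d. smul (x i) (basis i))"
proof (rule ext)
  fix j assume x: "x \<in> vecs"
  have "(\<Sum>i<d. smul (x i) (basis i)) j = (\<Sum>i<d. if j = i then x i else 0)"
    by (simp add: sum_fun_apply if_distrib cong: if_cong)
  also have "\<dots> = x j" using x by (simp add: vecs_def)
  finally show "x j = (\<Sum>i<d. smul (x i) (basis i)) j" by simp
qed

lemma mform_add_left: "mform (x + y) z = mform x z + mform y z"
  by (simp add: mform_def algebra_simps sum.distrib)
lemma mform_add_right: "mform z (x + y) = mform z x + mform z y"
  by (simp add: mform_def algebra_simps sum.distrib)
lemma mform_diff_left: "mform (x - y) z = mform x z - mform y z"
  by (simp add: mform_def algebra_simps sum_subtractf)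
lemma mform_diff_right: "mform z (x - y) = mform z x - mform z y"
  by (simp add: mform_def algebra_simps sum_subtractf)
lemma mform_minus_left: "mform (- x) z = - mform x z"
  by (simp add: mform_def algebra_simps sum_negf)
lemma mform_minus_right: "mform z (- x) = - mform z x"
  by (simp add: mform_def algebra_simps sum_negf)
lemma mform_smul_left: "mform (smul t x) z = t * mform x z"
  by (simp add: mform_def algebra_simps sum_distrib_left)
lemma mform_smul_right: "mform z (smul t x) = t * mform z x"
  by (simp add: mform_def algebra_simps sum_distrib_left)
lemma mform_zero_left [simp]: "mform 0 z = 0" by (simp add: mform_def)
lemma mform_zero_right [simp]: "mform z 0 = 0" by (simp add: mform_def)
lemma mform_sym: "mform x y = mform y x" by (simp add: mform_def mult.commute)
lemmas mform_lin = mform_add_left mform_add_right mform_diff_left mform_diff_right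
  mform_minus_left mform_minus_right mform_smul_left mform_smul_right

lemma mform_sum_left: "mform (\<Sum>i\<in>A. f i) y = (\<Sum>i\<in>A. mform (f i) y)"
proof (induction A rule: infinite_finite_induct)
  case (insert x A)
  then show ?case by (simp only: sum.insert[OF insert.hyps(1,2)] mform_add_left)
qed (simp_all add: mform_def)
lemma mform_sum_right: "mform y (\<Sum>i\<in>A. f i) = (\<Sum>i\<in>A. mform y (f i))"
  using mform_sum_left[of f A y] by (simp add: mform_sym)

lemma mform_basis0 [simp]: "mform x (basis 0) = x 0" "mform (basis 0) x = x 0"
  by (simp_all add: mform_def)
lemma mform_basis [simp]: "1 \<le> j \<Longrightarrow> j < d \<Longrightarrow> mform x (basis j) = - x j"
  by (simp add: mform_def if_distrib cong: if_cong)
lemma mform_basis' [simp]: "1 \<le> j \<Longrightarrow> j < d \<Longrightarrow> mform (basis j) x = - x j"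
  using mform_basis[of j x] by (simp add: mform_sym)

lemma mquad_add: "mquad (x + y) = mquad x + 2 * mform x y + mquad y"
  by (simp add: mquad_def mform_lin mform_sym[of y x])
lemma mquad_diff: "mquad (x - y) = mquad x - 2 * mform x y + mquad y"
  by (simp add: mquad_def mform_lin mform_sym[of y x])
lemma mquad_smul: "mquad (smul t x) = t^2 * mquad x"
  by (simp add: mquad_def mform_lin power2_eq_square)
lemma mquad_minus: "mquad (- x) = mquad x"
  by (simp add: mquad_def mform_lin)
lemma mquad_zero [simp]: "mquad 0 = 0"
  by (simp add: mquad_def)
lemma mquad_expand: "mquad x = (x 0)^2 - (\<Sum>i\<in>{1..<d}. (x i)^2)"
  by (simp add: mquad_def mform_def power2_eq_square)

lemma mform_lightvec:
  "1 \<le> i \<Longrightarrow> i < d \<Longrightarrow> 1 \<le> j \<Longrightarrow> j < d \<Longrightarrow>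
    mform (lightvec i s) (lightvec j t) = 1 - (if i = j then s * t else 0)"
  by (simp add: lightvec_def mform_lin)

lemma mquad_lightvec: "1 \<le> j \<Longrightarrow> j < d \<Longrightarrow> s \<in> {1, -1} \<Longrightarrow> mquad (lightvec j s) = 0"
  by (auto simp: mquad_def mform_lightvec)

lemma mquad_basis: "1 \<le> j \<Longrightarrow> j < d \<Longrightarrow> mquad (basis j) = -1"
  by (simp add: mquad_def)

lemma lightvec_apply: "1 \<le> j \<Longrightarrow> lightvec j s i = (if i = 0 then 1 else 0) + s * (if i = j then 1 else 0)"
  by (simp add: lightvec_def)

lemma lightvec_nonzero: "1 \<le> j \<Longrightarrow> lightvec j s \<noteq> 0"
proof
  assume "1 \<le> j" "lightvec j s = 0"
  then have "lightvec j s 0 = 0" by simp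
  then show False using \<open>1 \<le> j\<close> by (simp add: lightvec_apply)
qed

lemma mquad_simultaneous_neg:
  assumes "x \<in> vecs" "x 0 = 0" "x \<noteq> 0"
  shows "mquad x < 0"
proof -
  have "(\<Sum>i\<in>{1..<d}. (x i)^2) \<noteq> 0"
  proof
    assume "(\<Sum>i\<in>{1..<d}. (x i)^2) = 0"
    then have "\<forall>i\<in>{1..<d}. x i = 0" by (simp add: sum_nonneg_eq_0_iff)
    then have "x i = 0" if "i < d" for i using assms(2) that by (cases "i = 0") auto
    then have "x = 0" using assms(1) by (intro vecs_eqI) auto
    then show False using assms(3) by simp
  qed
  moreover have "(\<Sum>i\<in>{1..<d}. (x i)^2) \<ge> 0" by (simp add: sum_nonneg)
  ultimately show ?thesis using assms(2) by (simp add: mquad_expand)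
qed

lemma null_orthogonal_parallel:
  assumes a: "a \<in> vecs" and b: "b \<in> vecs" and ma: "mquad a = 0" and mb: "mquad b = 0"
    and ab: "mform a b = 0" and bnz: "b \<noteq> 0"
  shows "\<exists>t. a = smul t b"
proof -
  have b0: "b 0 \<noteq> 0" using mquad_simultaneous_neg[OF b] mb bnz by force
  define c where "c = a - smul (a 0 / b 0) b"
  have "mquad c = mquad a - 2 * (a 0 / b 0) * mform a b + (a 0 / b 0)^2 * mquad b"
    by (simp add: c_def mquad_def mform_lin mform_sym[of b a] power2_eq_square algebra_simps)
  then have "mquad c = 0" using ma mb ab by simp
  moreover have "c \<in> vecs" "c 0 = 0" using a b b0 by (simp_all add: c_def)
  ultimately have "c = 0" using mquad_simultaneous_neg by fastforce
  then show ?thesis by (auto simp: c_def)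
qed

lemma on_light_line:
  assumes V: "a \<in> vecs" "b \<in> vecs" "x \<in> vecs" and ab: "mquad (b - a) = 0" "a \<noteq> b"
    and xa: "mquad (x - a) = 0" and xb: "mquad (x - b) = 0"
  shows "\<exists>t. x = a + smul t (b - a)"
proof -
  have "x - b = (x - a) - (b - a)" by simp
  then have "mquad (x - b) = mquad (x - a) - 2 * mform (x - a) (b - a) + mquad (b - a)"
    by (simp only: mquad_diff)
  then have "mform (x - a) (b - a) = 0" using xa xb ab by simp
  then obtain t where "x - a = smul t (b - a)"
    using null_orthogonal_parallel[of "x - a" "b - a"] V xa ab by auto
  then show ?thesis by (metis add.commute diff_add_cancel)
qed

(* If every lightlike vector n satisfies mquad (w - n) = 0, then w = 0: light cones at
   different points differ.  This is what makes coordinates determined by events. *)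
lemma light_cones_separate:
  assumes wV: "w \<in> vecs" and d2: "2 \<le> d"
    and cone: "\<And>n. n \<in> vecs \<Longrightarrow> mquad n = 0 \<Longrightarrow> mquad (w - n) = 0"
  shows "w = 0"
proof -
  have mw: "mquad w = 0" using cone[of 0] by simp
  have orth: "w 0 - s * w j = 0" if j: "1 \<le> j" "j < d" and s: "s \<in> {1, -1}" for j s
  proof -
    have "mform w (lightvec j s) = 0"
      using cone[of "lightvec j s"] mw mquad_lightvec[OF j s] j by (simp add: mquad_diff)
    then show ?thesis using j by (simp add: lightvec_def mform_lin)
  qed
  have w0: "w 0 = 0" using orth[of 1 1] orth[of 1 "-1"] d2 by simp
  show "w = 0"
  proof (rule vecs_eqI[OF wV vecs_zero])
    fix i assume "i < d"
    then show "w i = 0 i" using w0 orth[of i 1] by (cases "i = 0") auto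
  qed
qed

end

locale minkowski3 = minkowski +
  assumes three_le_d: "3 \<le> d"
begin

(* For d >= 3 the light rays e_0 + s e_j (1 <= j < d, s = 1 or -1) still span Q^d after
   any single one of them is discarded: a set containing 0, closed under addition and
   containing all multiples of the remaining rays contains every point. *)
lemma span_by_light_rays:
  assumes j0: "1 \<le> j0" "j0 < d" and s0: "s0 \<in> {1, -1}"
    and S0: "0 \<in> S" and Sadd: "\<And>x y. x \<in> S \<Longrightarrow> y \<in> S \<Longrightarrow> x + y \<in> S"
    and Sgen: "\<And>j s a. 1 \<le> j \<Longrightarrow> j < d \<Longrightarrow> s \<in> {1, -1} \<Longrightarrow> (j, s) \<noteq> (j0, s0) \<Longrightarrow>
                 smul a (lightvec j s) \<in> S"
    and x: "x \<in> vecs"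
  shows "x \<in> S"
proof -
  define j1 where "j1 = (if j0 = 1 then 2 else (1::nat))"
  have j1: "1 \<le> j1" "j1 < d" "j1 \<noteq> j0" using three_le_d j0 by (auto simp: j1_def)
  have e0: "smul c (basis 0) \<in> S" for c
  proof -
    have "smul c (basis 0) = smul (c/2) (lightvec j1 1) + smul (c/2) (lightvec j1 (-1))"
      using j1 by (auto simp: lightvec_def field_simps intro!: ext)
    then show ?thesis using Sadd Sgen j1 by auto
  qed
  have ej: "smul c (basis j) \<in> S" if "1 \<le> j" "j < d" for j c
  proof (cases "j = j0")
    case False
    have "smul c (basis j) = smul (c/2) (lightvec j 1) + smul (-c/2) (lightvec j (-1))"
      using that by (auto simp: lightvec_def field_simps intro!: ext)
    then show ?thesis using Sadd Sgen that False by auto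
  next
    case True
    have "s0 * s0 = 1" "- s0 \<in> {1, -1}" "(j0, - s0) \<noteq> (j0, s0)" using s0 by auto
    moreover have "smul c (basis j) = smul (- s0 * c) (lightvec j0 (- s0)) + smul (s0 * c) (basis 0)"
      using True j0 \<open>s0 * s0 = 1\<close> by (auto simp: lightvec_def algebra_simps intro!: ext)
    ultimately show ?thesis using Sadd Sgen[of j0 "- s0"] e0 j0 True by auto
  qed
  have basis_S: "smul c (basis i) \<in> S" if "i < d" for i c
    using e0 ej that by (cases "i = 0") auto
  have "(\<Sum>i\<in>I. smul (x i) (basis i)) \<in> S" if "I \<subseteq> {..<d}" for I
    using that
  proof (induction I rule: infinite_finite_induct)
    case (insert i I)
    have "smul (x i) (basis i) \<in> S" using basis_S insert.prems by auto
    moreover have "(\<Sum>i\<in>I. smul (x i) (basis i)) \<in> S" using insert.IH insert.prems by blast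
    ultimately show ?case using Sadd by (simp only: sum.insert[OF insert.hyps(1,2)])
  qed (use S0 in simp_all)
  from this[of "{..<d}"] show ?thesis using basis_decomp[OF x] by simp
qed

end

section \<open>Bijections of Q^d preserving the light cone\<close>

(* The hypotheses that AxEv, SPR+ and AxSymD impose on a worldview transformation, in
   coordinate-free form: F is a bijection of Q^d preserving and reflecting lightlike
   separation, and preserving the Minkowski square of a simultaneous pair of events whose
   images are again simultaneous. *)
locale light_cone_map = minkowski3 d for d +
  fixes F :: "(nat \<Rightarrow> 'q::linordered_field) \<Rightarrow> (nat \<Rightarrow> 'q)"
  assumes F_vecs: "x \<in> vecs \<Longrightarrow> F x \<in> vecs"
    and F_inj: "x \<in> vecs \<Longrightarrow> y \<in> vecs \<Longrightarrow> F x = F y \<Longrightarrow> x = y"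
    and F_surj: "z \<in> vecs \<Longrightarrow> \<exists>x\<in>vecs. F x = z"
    and F_light: "x \<in> vecs \<Longrightarrow> y \<in> vecs \<Longrightarrow> mquad (F x - F y) = 0 \<longleftrightarrow> mquad (x - y) = 0"
    and F_simultaneous: "x \<in> vecs \<Longrightarrow> y \<in> vecs \<Longrightarrow> x 0 = y 0 \<Longrightarrow> F x 0 = F y 0 \<Longrightarrow>
                           mquad (F x - F y) = mquad (x - y)"
begin

lemma light_line_image:
  assumes b: "b \<in> vecs" and u: "u \<in> vecs" and null: "mquad u = 0" and nz: "u \<noteq> 0"
  shows "\<exists>r. F (b + smul t u) = F b + smul r (F (b + u) - F b)"
proof (rule on_light_line)
  have "b + u - b = u" "b + smul t u - b = smul t u" "b + smul t u - (b + u) = smul (t - 1) u"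
    by (simp_all add: smul_diff_left)
  then show "mquad (F (b + u) - F b) = 0" "mquad (F (b + smul t u) - F b) = 0"
    "mquad (F (b + smul t u) - F (b + u)) = 0"
    using F_light b u null by (simp_all add: mquad_smul)
  show "F b \<noteq> F (b + u)" using F_inj[of b "b + u"] b u nz by auto
qed (use F_vecs b u in auto)

lemma light_line_preimage:
  assumes b: "b \<in> vecs" and u: "u \<in> vecs" and null: "mquad u = 0" and nz: "u \<noteq> 0"
  shows "\<exists>t. F b + smul s (F (b + u) - F b) = F (b + smul t u)"
proof -
  have image_null: "mquad (F (b + u) - F b) = 0" using F_light[of "b + u" b] b u null by simp
  obtain p where p: "p \<in> vecs" and Fp: "F p = F b + smul s (F (b + u) - F b)"
    using F_surj[of "F b + smul s (F (b + u) - F b)"] F_vecs b u by auto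
  have "F p - F b = smul s (F (b + u) - F b)" "F p - F (b + u) = smul (s - 1) (F (b + u) - F b)"
    using Fp by (simp_all add: smul_simps)
  then have "mquad (p - b) = 0" "mquad (p - (b + u)) = 0"
    using F_light[of p b] F_light[of p "b + u"] p b u image_null by (simp_all add: mquad_smul)
  then obtain t where "p = b + smul t (b + u - b)"
    using on_light_line[of b "b + u" p] p b u null nz by auto
  then show ?thesis using Fp by (auto intro!: exI[of _ t])
qed

lemma light_parallelogram:
  assumes b: "b \<in> vecs" and u: "u \<in> vecs" and v: "v \<in> vecs"
    and null_u: "mquad u = 0" and null_v: "mquad v = 0" and uv: "mform u v \<noteq> 0"
  shows "F (b + u + v) = F (b + u) + F (b + v) - F b"
proof -
  define P U V X where "P = F b" and "U = F (b + u)" and "V = F (b + v)" and "X = F (b + u + v)"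
  define u' x' v' where "u' = U - P" and "x' = X - V" and "v' = V - P"
  have vecs: "P \<in> vecs" "U \<in> vecs" "V \<in> vecs" "X \<in> vecs" "u' \<in> vecs" "x' \<in> vecs"
    using F_vecs b u v by (auto simp: P_def U_def V_def X_def u'_def x'_def)
  have unz: "u \<noteq> 0" and vnz: "v \<noteq> 0" using uv by auto
  have shifts: "b + u + v - (b + v) = u" "b + u + v - (b + u) = v" "b + u - (b + v) = u - v"
    by (simp_all add: algebra_simps)
  have null': "mquad u' = 0" "mquad x' = 0" "mquad v' = 0" "mquad (X - U) = 0"
    using F_light[of "b + u" b] F_light[of "b + u + v" "b + v"] F_light[of "b + v" b]
      F_light[of "b + u + v" "b + u"] shifts b u v null_u null_v
    by (simp_all add: P_def U_def V_def X_def u'_def x'_def v'_def)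
  have "mquad (u - v) \<noteq> 0" using uv null_u null_v by (simp add: mquad_diff)
  then have UV: "mquad (u' - v') \<noteq> 0"
    using F_light[of "b + u" "b + v"] shifts b u v by (simp add: U_def V_def u'_def v'_def)
  have u'nz: "u' \<noteq> 0" using F_inj[of "b + u" b] b u unz by (auto simp: u'_def U_def P_def)
  have "mform u' x' = 0"
  proof (rule ccontr)
    assume h: "mform u' x' \<noteq> 0"
    define w where "w = P - V"
    define s where "s = - mform w x' / mform u' x'"
    have s: "mform (w + smul s u') x' = 0" using h by (simp add: s_def mform_lin)
    obtain t where pt: "P + smul s u' = F (b + smul t u)"
      using light_line_preimage[OF b u null_u unz] by (auto simp: P_def U_def u'_def)
    obtain r where qr: "F (b + v + smul t u) = V + smul r x'"
      using light_line_image[of "b + v" u t] b u v null_u unz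
      by (auto simp: V_def X_def x'_def add.commute add.left_commute)
    have "b + smul t u - (b + v + smul t u) = - v" by simp
    then have "mquad (F (b + smul t u) - F (b + v + smul t u)) = 0"
      using F_light b u v null_v by (simp add: mquad_minus)
    moreover have "F (b + smul t u) - F (b + v + smul t u) = (w + smul s u') - smul r x'"
      using pt qr by (simp add: w_def algebra_simps)
    ultimately have K: "mquad (w + smul s u') = 0"
      using s null' by (simp add: mquad_diff mquad_smul mform_lin)
    have "F (b + smul t u) - F (b + v) = w + smul s u'"
      using pt by (simp add: w_def V_def algebra_simps)
    then have "mquad (smul t u - v) = 0"
      using F_light[of "b + smul t u" "b + v"] b u v K by simp
    then have "t * mform u v = 0" using null_u null_v by (simp add: mquad_diff mquad_smul mform_lin)
    then have t0: "t = 0" using uv by simp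
    have "F (b + smul t u) - F (b + u + v) = (w + smul s u') - x'"
      using pt by (simp add: w_def x'_def X_def algebra_simps)
    then have "mquad (b + smul t u - (b + u + v)) = 0"
      using F_light[of "b + smul t u" "b + u + v"] b u v K s null' by (simp add: mquad_diff)
    moreover have "b + smul t u - (b + u + v) = smul (t - 1) u - v" by (simp add: smul_simps)
    ultimately have "(t - 1) * mform u v = 0"
      using null_u null_v by (simp add: mquad_diff mquad_smul mform_lin)
    then show False using uv t0 by simp
  qed
  then obtain \<alpha> where xa: "x' = smul \<alpha> u'"
    using null_orthogonal_parallel[of x' u'] vecs null' u'nz by (auto simp: mform_sym)
  have "X - U = v' + smul (\<alpha> - 1) u'"
    using xa by (simp add: x'_def u'_def v'_def smul_simps algebra_simps)
  then have "(\<alpha> - 1) * mform v' u' = 0" using null' by (simp add: mquad_add mquad_smul mform_lin)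
  moreover have "mform v' u' \<noteq> 0" using UV null' by (simp add: mquad_diff mform_sym)
  ultimately have "x' = u'" using xa by simp
  then show ?thesis by (simp add: X_def U_def V_def P_def u'_def x'_def algebra_simps)
qed

(* The set of admissible w is closed under addition and, by the parallelogram lemma,
   contains every ray not orthogonal to u, i.e. all rays but u's own. *)
lemma ray_increment_invariant:
  assumes j0: "1 \<le> j0" "j0 < d" and s0: "s0 \<in> {1, -1}" and c: "c \<noteq> 0"
    and u_def: "u = smul c (lightvec j0 s0)" and w: "w \<in> vecs" and b: "b \<in> vecs"
  shows "F (b + w + u) - F (b + w) = F (b + u) - F b"
proof -
  define S where "S = {w \<in> vecs. \<forall>b\<in>vecs. F (b + w + u) - F (b + w) = F (b + u) - F b}"
  have u: "u \<in> vecs" "mquad u = 0" using j0 mquad_lightvec[OF j0 s0] by (simp_all add: u_def mquad_smul)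
  have "x + y \<in> S" if "x \<in> S" "y \<in> S" for x y
  proof -
    have "F (b + (x + y) + u) - F (b + (x + y)) = F (b + u) - F b" if "b \<in> vecs" for b
      using \<open>x \<in> S\<close> \<open>y \<in> S\<close> that by (auto simp: S_def add.assoc[symmetric])
    then show ?thesis using that by (auto simp: S_def)
  qed
  moreover have "smul a (lightvec j s) \<in> S"
    if j: "1 \<le> j" "j < d" and s: "s \<in> {1, -1}" and ne: "(j, s) \<noteq> (j0, s0)" for j s a
  proof (cases "a = 0")
    case False
    define z where "z = smul a (lightvec j s)"
    have z: "z \<in> vecs" "mquad z = 0" using j mquad_lightvec[OF j s] by (simp_all add: z_def mquad_smul)
    have "mform (lightvec j0 s0) (lightvec j s) \<noteq> 0" using j j0 s s0 ne by (auto simp: mform_lightvec)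
    then have "mform u z \<noteq> 0" using c False by (simp add: u_def z_def mform_lin)
    then have "F (b + u + z) = F (b + u) + F (b + z) - F b" if "b \<in> vecs" for b
      using light_parallelogram[OF that u(1) z(1) u(2) z(2)] by simp
    then show ?thesis using z by (auto simp: S_def z_def algebra_simps)
  qed (simp add: S_def)
  ultimately have "w \<in> S" using span_by_light_rays[OF j0 s0, of S] w by (auto simp: S_def)
  then show ?thesis using b by (simp add: S_def)
qed

lemma increment_invariant:
  assumes b: "b \<in> vecs" and w: "w \<in> vecs"
  shows "F (b + w) - F b = F w - F 0"
proof -
  define T where "T = {w \<in> vecs. \<forall>b\<in>vecs. F (b + w) - F b = F w - F 0}"
  have j1: "1 \<le> (1::nat)" "1 < d" using three_le_d by auto
  have "x + y \<in> T" if x: "x \<in> T" and y: "y \<in> T" for x y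
  proof -
    have "F (b + (x + y)) - F b = F (x + y) - F 0" if "b \<in> vecs" for b
    proof -
      have "F (b + (x + y)) - F b = (F ((b + x) + y) - F (b + x)) + (F (b + x) - F b)"
        by (simp add: add.assoc)
      also have "\<dots> = (F (x + y) - F x) + (F x - F 0)" using x y that by (auto simp: T_def)
      finally show ?thesis by simp
    qed
    then show ?thesis using x y by (auto simp: T_def)
  qed
  moreover have "smul a (lightvec j s) \<in> T" if j: "1 \<le> j" "j < d" and s: "s \<in> {1, -1}" for j s a
  proof (cases "a = 0")
    case False
    then show ?thesis
      using ray_increment_invariant[OF j s False refl _ vecs_zero] j by (auto simp: T_def)
  qed (simp add: T_def)
  ultimately have "w \<in> T" using span_by_light_rays[OF j1, of 1 T] w by (auto simp: T_def)
  then show ?thesis using b by (simp add: T_def)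
qed

definition lin :: "(nat \<Rightarrow> 'q) \<Rightarrow> nat \<Rightarrow> 'q" where
  "lin w = F w - F 0"

lemma lin_vecs: "w \<in> vecs \<Longrightarrow> lin w \<in> vecs" using F_vecs by (simp add: lin_def)
lemma lin_zero [simp]: "lin 0 = 0" by (simp add: lin_def)
lemma F_lin: "b \<in> vecs \<Longrightarrow> w \<in> vecs \<Longrightarrow> F (b + w) = F b + lin w"
  using increment_invariant[of b w] by (simp add: lin_def algebra_simps)
lemma lin_add: "x \<in> vecs \<Longrightarrow> y \<in> vecs \<Longrightarrow> lin (x + y) = lin x + lin y"
  using F_lin[of x y] by (simp add: lin_def)
lemma lin_diff: "x \<in> vecs \<Longrightarrow> y \<in> vecs \<Longrightarrow> lin (x - y) = lin x - lin y"
  using lin_add[of "x - y" y] by simp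
lemma lin_inj: "x \<in> vecs \<Longrightarrow> y \<in> vecs \<Longrightarrow> lin x = lin y \<Longrightarrow> x = y"
  using F_inj by (simp add: lin_def)
lemma lin_surj: "z \<in> vecs \<Longrightarrow> \<exists>x\<in>vecs. lin x = z"
  using F_surj[of "z + F 0"] F_vecs by (force simp: lin_def)
lemma lin_light: "x \<in> vecs \<Longrightarrow> mquad (lin x) = 0 \<longleftrightarrow> mquad x = 0"
  using F_light[of x 0] by (simp add: lin_def)
lemma lin_simultaneous: "x \<in> vecs \<Longrightarrow> x 0 = 0 \<Longrightarrow> lin x 0 = 0 \<Longrightarrow> mquad (lin x) = mquad x"
  using F_simultaneous[of x 0] by (simp add: lin_def)
lemma lin_sum: "(\<And>i. i \<in> A \<Longrightarrow> f i \<in> vecs) \<Longrightarrow> lin (sum f A) = (\<Sum>i\<in>A. lin (f i))"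
proof (induction A rule: infinite_finite_induct)
  case (insert x A)
  then have "lin (f x + sum f A) = lin (f x) + lin (sum f A)" by (intro lin_add) auto
  then show ?case using insert by (simp only: sum.insert[OF insert.hyps(1,2)]) simp
qed (simp_all add: lin_def)

(* lin maps every light ray onto a light ray; ray_scale u records how the scalars of the
   ray through u are transformed. *)
definition ray_scale :: "(nat \<Rightarrow> 'q) \<Rightarrow> 'q \<Rightarrow> 'q" where
  "ray_scale u t = (SOME c. lin (smul t u) = smul c (lin u))"

lemma ray_scale_eq:
  assumes u: "u \<in> vecs" and null: "mquad u = 0" and nz: "u \<noteq> 0"
  shows "lin (smul t u) = smul (ray_scale u t) (lin u)"
proof -
  have tu: "smul t u \<in> vecs" using u by simp
  have null': "mquad (lin u) = 0" "mquad (lin (smul t u)) = 0"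
    using lin_light u tu null by (simp_all add: mquad_smul)
  have "lin (smul t u) - lin u = lin (smul (t - 1) u)"
    using lin_diff[OF tu u] by (simp add: smul_diff_left)
  then have "mquad (lin (smul t u) - lin u) = 0"
    using lin_light[of "smul (t - 1) u"] u null by (simp add: mquad_smul)
  then have "mform (lin (smul t u)) (lin u) = 0" using null' by (simp add: mquad_diff)
  moreover have "lin u \<noteq> 0" using lin_inj[of u 0] u nz by (auto simp: lin_def)
  ultimately have "\<exists>c. lin (smul t u) = smul c (lin u)"
    using null_orthogonal_parallel lin_vecs tu u null' by blast
  then show ?thesis unfolding ray_scale_def by (rule someI_ex)
qed

lemma ray_scale_props:
  assumes u: "u \<in> vecs" and null: "mquad u = 0" and nz: "u \<noteq> 0"
  shows "additive (ray_scale u)" and "ray_scale u 1 = 1" and "\<exists>t. ray_scale u t = c"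
proof -
  have lin_nz: "lin u \<noteq> 0" using lin_inj[of u 0] u nz by (auto simp: lin_def)
  note scale = ray_scale_eq[OF assms]
  show "additive (ray_scale u)"
  proof
    fix s t
    have "smul (ray_scale u (s + t)) (lin u) = lin (smul s u) + lin (smul t u)"
      using scale[of "s + t"] lin_add u by (simp add: smul_add_left)
    also have "\<dots> = smul (ray_scale u s + ray_scale u t) (lin u)"
      using scale by (simp add: smul_add_left)
    finally show "ray_scale u (s + t) = ray_scale u s + ray_scale u t" using smul_cancel[OF lin_nz] by blast
  qed
  show "ray_scale u 1 = 1" using scale[of 1] smul_cancel[OF lin_nz, of _ 1] by simp
  obtain x where x: "x \<in> vecs" and lin_x: "lin x = smul c (lin u)"
    using lin_surj[of "smul c (lin u)"] lin_vecs u by auto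
  have null_lin: "mquad (lin u) = 0" using lin_light u null by simp
  have "lin (x - u) = smul (c - 1) (lin u)" using lin_diff[OF x u] lin_x by (simp add: smul_diff_left)
  then have "mquad (x - u) = 0" "mquad x = 0"
    using lin_light[of "x - u"] lin_light[OF x] x u lin_x null_lin by (simp_all add: mquad_smul)
  then have "mform x u = 0" using null by (simp add: mquad_diff)
  then obtain t where "x = smul t u" using null_orthogonal_parallel[of x u] x u \<open>mquad x = 0\<close> null nz by auto
  then have "smul (ray_scale u t) (lin u) = smul c (lin u)" using scale[of t] lin_x by simp
  then show "\<exists>t. ray_scale u t = c" using smul_cancel[OF lin_nz] by blast
qed

(* Two non-orthogonal light rays u, v and an auxiliary vector q: the point
   q + t v - s u is lightlike exactly on the hyperbola t (1 - s) = k, and lin transports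
   this to a conic condition on ray_scale v t and ray_scale u s. *)
lemma ray_scale_hyperbola:
  assumes u: "u \<in> vecs" and v: "v \<in> vecs" and q: "q \<in> vecs"
    and null_u: "mquad u = 0" and null_v: "mquad v = 0" and uv: "mform u v \<noteq> 0"
    and qu: "mform q u = 0" and qv: "mform q v = mform u v" and qq: "mquad q = - 2 * k * mform u v"
  shows "t * (1 - s) = k \<longleftrightarrow>
    mquad (lin q) + 2 * ray_scale v t * mform (lin q) (lin v) - 2 * ray_scale u s * mform (lin q) (lin u)
      - 2 * ray_scale u s * ray_scale v t * mform (lin u) (lin v) = 0"
proof -
  define z where "z = q + smul t v - smul s u"
  have z: "z \<in> vecs" using u v q by (simp add: z_def)
  have unz: "u \<noteq> 0" and vnz: "v \<noteq> 0" using uv by auto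
  have "mquad z = 2 * mform u v * (t * (1 - s) - k)"
    using null_u null_v qu qv qq
    by (simp add: z_def mquad_def mform_lin mform_sym[of u q] mform_sym[of v q] mform_sym[of v u]
        power2_eq_square algebra_simps)
  then have "t * (1 - s) = k \<longleftrightarrow> mquad (lin z) = 0" using lin_light[OF z] uv by simp
  moreover have "lin z = lin q + smul (ray_scale v t) (lin v) - smul (ray_scale u s) (lin u)"
    using lin_add lin_diff u v q ray_scale_eq[OF u null_u unz] ray_scale_eq[OF v null_v vnz]
    by (simp add: z_def)
  moreover have "mquad (lin u) = 0" "mquad (lin v) = 0" using lin_light u v null_u null_v by simp_all
  ultimately show ?thesis
    by (simp add: mquad_def mform_lin mform_sym[of "lin v" "lin q"] mform_sym[of "lin u" "lin q"]
        mform_sym[of "lin v" "lin u"] power2_eq_square algebra_simps)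
qed

lemma ray_scale_pair_inverse:
  assumes j: "1 \<le> j" "j < d" and j': "1 \<le> j'" "j' < d" and s: "s \<in> {1, -1}" and s': "s' \<in> {1, -1}"
    and ne: "(j, s) \<noteq> (j', s')" and x: "x \<noteq> 0"
  shows "ray_scale (lightvec j' s') (1 / x) * ray_scale (lightvec j s) x = 1"
proof -
  define u v where "u = lightvec j s" and "v = lightvec j' s'"
  have u: "u \<in> vecs" "mquad u = 0" "u \<noteq> 0" and v: "v \<in> vecs" "mquad v = 0" "v \<noteq> 0"
    using j j' s s' mquad_lightvec lightvec_nonzero by (simp_all add: u_def v_def)
  note scale_u = ray_scale_props[OF u] and scale_v = ray_scale_props[OF v]
  obtain q k where q: "q \<in> vecs" and k: "k \<noteq> 0" "ray_scale v k = k" "\<And>y. ray_scale u (k * y) = k * ray_scale u y"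
    and uv: "mform u v \<noteq> 0" and qu: "mform q u = 0" and qv: "mform q v = mform u v"
    and qq: "mquad q = - 2 * k * mform u v"
  proof (cases "j = j'")
    case True
    then have ss: "s * s' = -1" using s s' ne by auto
    define i where "i = (if j = 1 then 2 else (1::nat))"
    have i: "1 \<le> i" "i < d" "i \<noteq> j" using three_le_d j by (auto simp: i_def)
    have "mform u v = 2" using j True ss by (simp add: u_def v_def mform_lightvec)
    moreover have "u i = 0" "v i = 0" using i j True by (simp_all add: u_def v_def lightvec_apply)
    ultimately show ?thesis
      using u i scale_v(2) by (intro that[of "u + smul 2 (basis i)" 1])
        (simp_all add: mform_lin mquad_add mquad_smul mquad_basis mquad_def[symmetric])
  next
    case False
    have "mform u v = 1" using j j' False by (simp add: u_def v_def mform_lightvec)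
    moreover have "u j' = 0" "v j' = s'" using j j' False by (simp_all add: u_def v_def lightvec_apply)
    moreover have "ray_scale v (1 / 2) = 1 / 2" "\<And>y. ray_scale u (1 / 2 * y) = 1 / 2 * ray_scale u y"
      using additive_half[OF scale_v(1), of 1] additive_half[OF scale_u(1)] scale_v(2) by simp_all
    ultimately show ?thesis
      using u j' s' by (intro that[of "smul (1 + s') u + basis j'" "1 / 2"])
        (auto simp: mform_lin mquad_add mquad_smul mquad_basis mquad_def[symmetric] algebra_simps)
  qed
  have "ray_scale v (1 / x) * ray_scale u x = 1"
    by (rule inverse_from_hyperbola[OF scale_u(1) scale_v(1) scale_u(2) scale_u(3) scale_v(3) k
          ray_scale_hyperbola[OF u(1) v(1) q u(2) v(2) uv qu qv qq] x])
  then show ?thesis by (simp add: u_def v_def)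
qed

definition sigma :: "'q \<Rightarrow> 'q" where
  "sigma = ray_scale (lightvec 1 1)"

lemma one_lt_d: "(1::nat) < d"
  using three_le_d by simp

lemma sigma_props: "additive sigma" "sigma 1 = 1" "\<exists>t. sigma t = c"
  using ray_scale_props[of "lightvec 1 1"] one_lt_d mquad_lightvec[of 1 1] lightvec_nonzero[of 1 1]
  by (auto simp: sigma_def)

lemma ray_scale_uniform:
  assumes j: "1 \<le> j" "j < d" and s: "s \<in> {1, -1}"
  shows "ray_scale (lightvec j s) = sigma"
proof
  fix x
  (* a third ray different from both (j, s) and (1, 1) *)
  define j2 where "j2 = (if (j, s) = (1, -1) then 2 else (1::nat))"
  define s2 where "s2 = (if (j, s) = (1, -1) then 1 else (-1::'q))"
  have j2: "1 \<le> j2" "j2 < d" "s2 \<in> {1, -1}" using three_le_d by (auto simp: j2_def s2_def)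
  have ne: "(j, s) \<noteq> (j2, s2)" "(1, 1) \<noteq> (j2, s2)" by (auto simp: j2_def s2_def)
  show "ray_scale (lightvec j s) x = sigma x"
  proof (cases "x = 0")
    case True
    have "additive (ray_scale (lightvec j s))"
      using ray_scale_props(1)[of "lightvec j s"] j s by (simp add: mquad_lightvec lightvec_nonzero)
    then show ?thesis using True additive.zero sigma_props(1) by metis
  next
    case False
    have "ray_scale (lightvec j2 s2) (1 / x) * ray_scale (lightvec j s) x = 1"
      "ray_scale (lightvec j2 s2) (1 / x) * sigma x = 1"
      using ray_scale_pair_inverse[OF j j2(1,2) s j2(3) ne(1) False]
        ray_scale_pair_inverse[of 1 j2 1 s2 x] one_lt_d j2 ne(2) False by (auto simp: sigma_def)
    then show ?thesis by (metis mult_left_cancel mult_zero_left zero_neq_one)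
  qed
qed

(* By Hua's identity sigma is a field endomorphism. *)
lemma sigma_mult: "sigma (x * y) = sigma x * sigma y"
proof (rule hua_multiplicative[OF sigma_props(1,2)])
  fix x :: 'q assume "x \<noteq> 0"
  then show "sigma (1 / x) * sigma x = 1"
    using ray_scale_pair_inverse[of 1 1 1 "-1" x] ray_scale_uniform[of 1 "-1"] one_lt_d
    by (simp add: sigma_def)
qed

(* lin is sigma-semilinear: true on the spanning light rays and preserved by sums. *)
lemma lin_semilinear:
  assumes x: "x \<in> vecs"
  shows "lin (smul t x) = smul (sigma t) (lin x)"
proof -
  define T where "T = {x \<in> vecs. \<forall>t. lin (smul t x) = smul (sigma t) (lin x)}"
  have "x + y \<in> T" if "x \<in> T" "y \<in> T" for x y
    using that lin_add by (auto simp: T_def smul_add_right)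
  moreover have "smul a (lightvec j s) \<in> T" if j: "1 \<le> j" "j < d" and s: "s \<in> {1, -1}" for j s a
  proof -
    have n: "lightvec j s \<in> vecs" "mquad (lightvec j s) = 0" "lightvec j s \<noteq> 0"
      using j s mquad_lightvec lightvec_nonzero by auto
    have "lin (smul t (smul a (lightvec j s))) = smul (sigma t) (lin (smul a (lightvec j s)))" for t
      using ray_scale_eq[OF n, of "t * a"] ray_scale_eq[OF n, of a] ray_scale_uniform[OF j s]
      by (simp add: smul_mult[symmetric] sigma_mult mult.commute)
    then show ?thesis using n by (simp add: T_def)
  qed
  moreover have "0 \<in> T" by (simp add: T_def)
  ultimately have "x \<in> T" using span_by_light_rays[of 1 1 T x] one_lt_d x by auto
  then show ?thesis by (simp add: T_def)
qed

lemma simultaneous_vector_with_simultaneous_image: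
  "\<exists>x\<in>vecs. x 0 = 0 \<and> x \<noteq> 0 \<and> lin x 0 = 0"
proof (cases "lin (basis 1) 0 = 0")
  case True
  then show ?thesis using one_lt_d by (intro bexI[of _ "basis 1"]) (auto simp: fun_eq_iff)
next
  case False
  obtain a where a: "sigma a = - lin (basis 2) 0 / lin (basis 1) 0" using sigma_props(3) by blast
  define x where "x = smul a (basis 1) + basis 2"
  have "lin x = smul (sigma a) (lin (basis 1)) + lin (basis 2)"
    using lin_add lin_semilinear three_le_d by (simp add: x_def)
  then have "lin x 0 = 0" using a False by simp
  moreover have "x \<in> vecs" "x 0 = 0" "x 2 = 1" using three_le_d by (simp_all add: x_def)
  ultimately show ?thesis by (intro bexI[of _ x]) auto
qed

(* The simultaneity hypothesis forces sigma r ^ 2 = r ^ 2; an additive map with this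
   property is the identity. *)
lemma sigma_id: "sigma t = t"
proof -
  obtain x where x: "x \<in> vecs" "x 0 = 0" "x \<noteq> 0" and lin_x: "lin x 0 = 0"
    using simultaneous_vector_with_simultaneous_image by blast
  have spacelike: "mquad x \<noteq> 0" using mquad_simultaneous_neg[OF x] by simp
  have key: "sigma r * sigma r * mquad (lin x) = r * r * mquad x" for r
  proof -
    have "mquad (lin (smul r x)) = mquad (smul r x)"
      using lin_simultaneous[of "smul r x"] lin_semilinear[OF x(1)] x lin_x by simp
    then show ?thesis using lin_semilinear[OF x(1)] by (simp add: mquad_smul power2_eq_square)
  qed
  have "mquad (lin x) = mquad x" using key[of 1] sigma_props(2) by simp
  then have square: "sigma r * sigma r = r * r" for r using key[of r] spacelike by simp
  have "sigma (t + 1) = sigma t + 1" using additive.add[OF sigma_props(1)] sigma_props(2) by simp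
  then have "(sigma t + 1) * (sigma t + 1) = (t + 1) * (t + 1)" using square[of "t + 1"] by simp
  then have "2 * sigma t = 2 * t" using square[of t] by (simp add: algebra_simps)
  then show ?thesis by simp
qed

lemma lin_smul: "x \<in> vecs \<Longrightarrow> lin (smul t x) = smul t (lin x)"
  using lin_semilinear sigma_id by simp

lemma lin_expand: "y \<in> vecs \<Longrightarrow> lin y = (\<Sum>i<d. smul (y i) (lin (basis i)))"
  using basis_decomp[of y] lin_sum[of "{..<d}" "\<lambda>i. smul (y i) (basis i)"] lin_smul by simp

definition gram :: "nat \<Rightarrow> nat \<Rightarrow> 'q" where
  "gram i j = mform (lin (basis i)) (lin (basis j))"

(* Images of the light vectors e_0 +- e_j are lightlike: gram 0 j = 0 and gram j j = - gram 0 0. *)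
lemma gram_time_space:
  assumes j: "1 \<le> j" "j < d"
  shows "gram 0 j = 0" and "gram j j = - gram 0 0"
proof -
  have r: "gram 0 0 + 2 * s * gram 0 j + s * s * gram j j = 0" if s: "s \<in> {1, -1}" for s
  proof -
    have "lin (lightvec j s) = lin (basis 0) + smul s (lin (basis j))"
      using lin_add lin_smul j by (simp add: lightvec_def)
    moreover have "mquad (lin (lightvec j s)) = 0" using lin_light[of "lightvec j s"] mquad_lightvec[OF j s] j by simp
    ultimately show ?thesis
      by (simp add: gram_def mquad_add mquad_smul mquad_def mform_lin power2_eq_square
          mform_sym[of "lin (basis j)" "lin (basis 0)"] algebra_simps)
  qed
  from r[of 1] r[of "-1"] show "gram 0 j = 0" and "gram j j = - gram 0 0" by simp_all
qed

(* The image of the lightlike vector 5 e_0 + 3 e_i + 4 e_j is lightlike: gram i j = 0. *)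
lemma gram_space_space:
  assumes i: "1 \<le> i" "i < d" and j: "1 \<le> j" "j < d" and ij: "i \<noteq> j"
  shows "gram i j = 0"
proof -
  define z :: "nat \<Rightarrow> 'q" where "z = smul 5 (basis 0) + smul 3 (basis i) + smul 4 (basis j)"
  have z: "z \<in> vecs" using i j by (simp add: z_def)
  have "mquad z = 25 - 9 - 16" using i j ij by (simp add: z_def mquad_def mform_lin)
  then have "mquad (lin z) = 0" using lin_light[OF z] by simp
  moreover have "lin z = smul 5 (lin (basis 0)) + smul 3 (lin (basis i)) + smul 4 (lin (basis j))"
    using lin_add lin_smul i j by (simp add: z_def)
  ultimately have "25 * gram 0 0 + 9 * gram i i + 16 * gram j j + 30 * gram 0 i + 40 * gram 0 j
      + 24 * gram i j = 0"
    by (simp add: mquad_def mform_lin gram_def mform_sym[of "lin (basis i)" "lin (basis 0)"]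
        mform_sym[of "lin (basis j)" "lin (basis 0)"] mform_sym[of "lin (basis j)" "lin (basis i)"]
        algebra_simps)
  then show ?thesis using gram_time_space[OF i] gram_time_space[OF j] by simp
qed

lemma gram_diagonal:
  "i < d \<Longrightarrow> j < d \<Longrightarrow> gram i j = (if i = j then (if i = 0 then gram 0 0 else - gram 0 0) else 0)"
  using gram_time_space[of i] gram_time_space[of j] gram_space_space[of i j]
  by (cases "i = 0"; cases "j = 0") (auto simp: gram_def mform_sym)

(* lin multiplies the Minkowski square by the constant gram 0 0 \<dots> *)
lemma lin_conformal:
  assumes y: "y \<in> vecs"
  shows "mquad (lin y) = gram 0 0 * mquad y"
proof -
  have "mquad (lin y) = (\<Sum>i<d. \<Sum>j<d. y i * (y j * gram i j))"
    unfolding mquad_def lin_expand[OF y] mform_sum_left mform_sum_right mform_smul_left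
      mform_smul_right gram_def
    by (simp add: sum_distrib_left mform_sym)
  also have "\<dots> = (\<Sum>i<d. y i * y i * (if i = 0 then gram 0 0 else - gram 0 0))"
  proof (rule sum.cong)
    fix i assume "i \<in> {..<d}"
    then have "(\<Sum>j<d. y i * (y j * gram i j))
        = (\<Sum>j<d. if j = i then y i * y i * (if i = 0 then gram 0 0 else - gram 0 0) else 0)"
      by (intro sum.cong) (auto simp: gram_diagonal)
    also have "\<dots> = y i * y i * (if i = 0 then gram 0 0 else - gram 0 0)"
      using \<open>i \<in> {..<d}\<close> by (simp add: sum.delta')
    finally show "(\<Sum>j<d. y i * (y j * gram i j)) = y i * y i * (if i = 0 then gram 0 0 else - gram 0 0)" .
  qed simp
  also have "\<dots> = y 0 * y 0 * gram 0 0 + (\<Sum>i\<in>{1..<d}. - gram 0 0 * (y i)^2)"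
  proof -
    have "(\<Sum>i<d. y i * y i * (if i = 0 then gram 0 0 else - gram 0 0))
        = y 0 * y 0 * gram 0 0 + (\<Sum>i\<in>{Suc 0..<d}. y i * y i * (if i = 0 then gram 0 0 else - gram 0 0))"
      using one_lt_d by (simp add: atLeast0LessThan[symmetric] sum.atLeast_Suc_lessThan)
    also have "(\<Sum>i\<in>{Suc 0..<d}. y i * y i * (if i = 0 then gram 0 0 else - gram 0 0))
        = (\<Sum>i\<in>{1..<d}. - gram 0 0 * (y i)^2)"
      by (rule sum.cong) (auto simp: power2_eq_square)
    finally show ?thesis .
  qed
  also have "\<dots> = y 0 * y 0 * gram 0 0 - gram 0 0 * (\<Sum>i\<in>{1..<d}. (y i)^2)"
    by (simp add: sum_distrib_left sum_negf)
  also have "\<dots> = gram 0 0 * mquad y"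
    by (simp add: mquad_expand power2_eq_square algebra_simps)
  finally show ?thesis .
qed

(* \<dots> which equals 1 by the simultaneity hypothesis. *)
lemma lin_isometry: "y \<in> vecs \<Longrightarrow> mquad (lin y) = mquad y"
proof -
  obtain x where x: "x \<in> vecs" "x 0 = 0" "x \<noteq> 0" and lin_x: "lin x 0 = 0"
    using simultaneous_vector_with_simultaneous_image by blast
  have "gram 0 0 * mquad x = mquad x"
    using lin_simultaneous[OF x(1,2) lin_x] lin_conformal[OF x(1)] by simp
  moreover have "mquad x \<noteq> 0" using mquad_simultaneous_neg[OF x] by simp
  ultimately have "gram 0 0 = 1" by simp
  then show "y \<in> vecs \<Longrightarrow> mquad (lin y) = mquad y" using lin_conformal by simp
qed

theorem light_cone_map_affine:
  "x \<in> vecs \<Longrightarrow> F x = F 0 + (\<Sum>i<d. smul (x i) (lin (basis i)))"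
  using F_lin[of 0 x] lin_expand by simp

theorem light_cone_map_isometry:
  "x \<in> vecs \<Longrightarrow> y \<in> vecs \<Longrightarrow> mquad (F x - F y) = mquad (x - y)"
  using F_lin[of 0 x] F_lin[of 0 y] lin_diff[of x y] lin_isometry[of "x - y"] by simp

end

section \<open>The light axiom as a formula of the language\<close>

definition light_axiom :: "nat \<Rightarrow> ('b \<Rightarrow> 'b \<Rightarrow> bool) \<Rightarrow> ('b \<Rightarrow> 'b \<Rightarrow> 'q::linordered_field list \<Rightarrow> bool)
    \<Rightarrow> 'b \<Rightarrow> bool" where
  "light_axiom d Ph W h \<longleftrightarrow> (\<forall>x y. length x = d \<and> length y = d \<longrightarrow>
     ((\<exists>p b. Ph p b \<and> W h p x \<and> W h p y) \<longleftrightarrow> space2 d x y = (time x y)^2))"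

fun allQ :: "nat list \<Rightarrow> form \<Rightarrow> form" where
  "allQ [] f = f"
| "allQ (n # ns) f = Neg (ExQ n (Neg (allQ ns f)))"

lemma sat_allQ:
  "sat IOb Ph W eb eq (allQ ns f) \<longleftrightarrow> (\<forall>eq'. (\<forall>i. i \<notin> set ns \<longrightarrow> eq' i = eq i) \<longrightarrow> sat IOb Ph W eb eq' f)"
proof (induction ns arbitrary: eq)
  case Nil
  then show ?case by (auto simp: fun_eq_iff)
next
  case (Cons n ns)
  have "(\<forall>q eq'. (\<forall>i. i \<notin> set ns \<longrightarrow> eq' i = (eq(n := q)) i) \<longrightarrow> sat IOb Ph W eb eq' f)
     \<longleftrightarrow> (\<forall>eq'. (\<forall>i. i \<notin> set (n # ns) \<longrightarrow> eq' i = eq i) \<longrightarrow> sat IOb Ph W eb eq' f)"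
  proof (intro iffI allI impI)
    fix eq' assume agree: "\<forall>i. i \<notin> set (n # ns) \<longrightarrow> eq' i = eq i"
      and all: "\<forall>q eq'. (\<forall>i. i \<notin> set ns \<longrightarrow> eq' i = (eq(n := q)) i) \<longrightarrow> sat IOb Ph W eb eq' f"
    have "\<forall>i. i \<notin> set ns \<longrightarrow> eq' i = (eq(n := eq' n)) i" using agree by auto
    then show "sat IOb Ph W eb eq' f" using all by blast
  next
    fix q eq' assume all: "\<forall>eq'. (\<forall>i. i \<notin> set (n # ns) \<longrightarrow> eq' i = eq i) \<longrightarrow> sat IOb Ph W eb eq' f"
      and agree: "\<forall>i. i \<notin> set ns \<longrightarrow> eq' i = (eq(n := q)) i"
    have "\<forall>i. i \<notin> set (n # ns) \<longrightarrow> eq' i = eq i" using agree by auto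
    then show "sat IOb Ph W eb eq' f" using all by blast
  qed
  moreover have "sat IOb Ph W eb eq (allQ (n # ns) f)
      \<longleftrightarrow> (\<forall>q. sat IOb Ph W eb (eq(n := q)) (allQ ns f))" by simp
  ultimately show ?case by (simp only: Cons.IH)
qed

definition iffF :: "form \<Rightarrow> form \<Rightarrow> form" where
  "iffF a b = Conj (Neg (Conj a (Neg b))) (Neg (Conj b (Neg a)))"

lemma sat_iffF: "sat IOb Ph W eb eq (iffF a b) \<longleftrightarrow> (sat IOb Ph W eb eq a \<longleftrightarrow> sat IOb Ph W eb eq b)"
  by (auto simp: iffF_def)

definition sumT :: "(nat \<Rightarrow> qterm) \<Rightarrow> nat list \<Rightarrow> qterm \<Rightarrow> qterm" where
  "sumT t l base = foldr (\<lambda>i acc. QAdd (t i) acc) l base"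

lemma eval_sumT: "evalq eq (sumT t l base) = (\<Sum>i\<leftarrow>l. evalq eq (t i)) + evalq eq base"
  by (induction l) (auto simp: sumT_def algebra_simps)

(* Both sides of the light axiom for the observer in body variable 0, where the
   coordinates x = (v_0, ..., v_(d-1)) and y = (v_d, ..., v_(2d-1)) are quantity variables:
   some photon is present at x and at y, and space2 x y = time x y ^ 2 (written without
   subtraction, which the language lacks). *)
definition photon_formula :: "nat \<Rightarrow> form" where
  "photon_formula d = ExB 1 (ExB 2 (Conj (PhA 1 2)
     (Conj (WA 0 1 (map QVar [0..<d])) (WA 0 1 (map (\<lambda>i. QVar (d + i)) [0..<d])))))"

definition cone_formula :: "nat \<Rightarrow> form" where
  "cone_formula d = QEq
     (sumT (\<lambda>i. QAdd (QMul (QVar i) (QVar i)) (QMul (QVar (d + i)) (QVar (d + i)))) [1..<d]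
        (QAdd (QMul (QVar 0) (QVar d)) (QMul (QVar 0) (QVar d))))
     (sumT (\<lambda>i. QAdd (QMul (QVar i) (QVar (d + i))) (QMul (QVar i) (QVar (d + i)))) [1..<d]
        (QAdd (QMul (QVar 0) (QVar 0)) (QMul (QVar d) (QVar d))))"

definition light_formula :: "nat \<Rightarrow> form" where
  "light_formula d = allQ [0..<2 * d] (iffF (photon_formula d) (cone_formula d))"

lemma light_formula_free_body_vars: "fvB (light_formula d) \<subseteq> {0}"
proof -
  have "fvB (allQ ns f) = fvB f" for ns f by (induction ns) auto
  then show ?thesis unfolding light_formula_def photon_formula_def cone_formula_def iffF_def
    by (simp; blast)
qed

lemma light_formula_wf: "wf_form d (light_formula d)"
proof -
  have "wf_form d (allQ ns f) = wf_form d f" for ns f by (induction ns) auto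
  then show ?thesis by (simp add: light_formula_def photon_formula_def cone_formula_def iffF_def)
qed

lemma sat_photon_formula:
  "sat IOb Ph W (eb(0 := h)) e (photon_formula d) \<longleftrightarrow>
     (\<exists>p b. Ph p b \<and> W h p (map e [0..<d]) \<and> W h p (map (\<lambda>i. e (d + i)) [0..<d]))"
  by (simp add: photon_formula_def comp_def)

lemma sat_cone_formula:
  fixes e :: "nat \<Rightarrow> 'q::linordered_field"
  assumes "1 \<le> d"
  shows "sat IOb Ph W eb e (cone_formula d) \<longleftrightarrow>
    space2 d (map e [0..<d]) (map (\<lambda>i. e (d + i)) [0..<d])
      = (time (map e [0..<d]) (map (\<lambda>i. e (d + i)) [0..<d]))^2"
proof -
  have "space2 d (map e [0..<d]) (map (\<lambda>i. e (d + i)) [0..<d])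
      = (\<Sum>i\<in>{1..<d}. (e i * e i + e (d + i) * e (d + i)) - (e i * e (d + i) + e i * e (d + i)))"
    unfolding space2_def by (intro sum.cong) (auto simp: power2_eq_square algebra_simps)
  also have "\<dots> = (\<Sum>i\<leftarrow>[1..<d]. e i * e i + e (d + i) * e (d + i))
      - (\<Sum>i\<leftarrow>[1..<d]. e i * e (d + i) + e i * e (d + i))"
    by (simp add: sum_list_distinct_conv_sum_set sum_subtractf)
  finally show ?thesis using assms
    by (simp only: cone_formula_def sat.simps evalq.simps eval_sumT)
      (simp add: time_def power2_eq_square algebra_simps)
qed

lemma sat_light_formula:
  fixes W :: "'b \<Rightarrow> 'b \<Rightarrow> 'q::linordered_field list \<Rightarrow> bool"
  assumes d: "1 \<le> d"
  shows "sat IOb Ph W (eb(0 := h)) eq (light_formula d) \<longleftrightarrow> light_axiom d Ph W h"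
proof -
  define P where "P x y \<longleftrightarrow> ((\<exists>p b. Ph p b \<and> W h p x \<and> W h p y) \<longleftrightarrow> space2 d x y = (time x y)^2)"
    for x y :: "'q list"
  have "sat IOb Ph W (eb(0 := h)) eq (light_formula d) \<longleftrightarrow>
      (\<forall>e. (\<forall>i. i \<notin> set [0..<2 * d] \<longrightarrow> e i = eq i) \<longrightarrow> P (map e [0..<d]) (map (\<lambda>i. e (d + i)) [0..<d]))"
    unfolding light_formula_def sat_allQ sat_iffF sat_photon_formula sat_cone_formula[OF d] P_def ..
  also have "\<dots> \<longleftrightarrow> (\<forall>x y. length x = d \<and> length y = d \<longrightarrow> P x y)"
  proof (intro iffI allI impI)
    fix x y :: "'q list" assume l: "length x = d \<and> length y = d"
      and all: "\<forall>e. (\<forall>i. i \<notin> set [0..<2 * d] \<longrightarrow> e i = eq i) \<longrightarrow> P (map e [0..<d]) (map (\<lambda>i. e (d + i)) [0..<d])"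
    define e where "e = (\<lambda>i. if i < d then x ! i else if i < 2 * d then y ! (i - d) else eq i)"
    have "map e [0..<d] = x" "map (\<lambda>i. e (d + i)) [0..<d] = y"
      using l by (auto simp: e_def intro!: nth_equalityI)
    moreover have "\<forall>i. i \<notin> set [0..<2 * d] \<longrightarrow> e i = eq i" by (auto simp: e_def)
    ultimately show "P x y" using all by metis
  qed simp
  finally show ?thesis by (simp add: light_axiom_def P_def)
qed

(* AxSymD(ii) forces c = 1 in AxLight, and SPR+ transfers the light axiom to every
   inertial observer. *)
lemma light_axiom_inertial:
  fixes W :: "'b \<Rightarrow> 'b \<Rightarrow> 'q::linordered_field list \<Rightarrow> bool"
  assumes SR: "SR d IOb Ph W" and d: "2 \<le> d" and h: "IOb h"
  shows "light_axiom d Ph W h"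
proof -
  have d1: "1 \<le> d" using d by simp
  obtain m0 c where m0: "IOb m0" and c: "c > 0" and light:
    "\<And>x y. length x = d \<Longrightarrow> length y = d \<Longrightarrow>
       (\<exists>p b. Ph p b \<and> W m0 p x \<and> W m0 p y) \<longleftrightarrow> space2 d x y = c^2 * (time x y)^2"
    using SR unfolding SR_def AxLight_def by blast
  define o1 :: "'q list" where "o1 = 1 # 1 # replicate (d - 2) 0"
  have o1: "length o1 = d" "o1 ! 0 = 1" using d by (simp_all add: o1_def)
  have "space2 d (replicate d 0) o1 = (\<Sum>i\<in>{1..<d}. if i = 1 then 1 else 0)"
    unfolding space2_def using d
    by (intro sum.cong) (auto simp: o1_def nth_Cons' nth_replicate)
  also have "\<dots> = 1" using d by simp
  finally have "c^2 = 1"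
    using light[of "replicate d 0" o1] o1 SR m0 by (auto simp: SR_def AxSymD_def o1_def time_def)
  then have "c = 1" using c by (simp add: power2_eq_1_iff)
  then have "light_axiom d Ph W m0" using light by (simp add: light_axiom_def)
  then have "sat IOb Ph W ((\<lambda>_. m0)(0 := m0)) (\<lambda>_. 0) (light_formula d)"
    by (rule sat_light_formula[OF d1, THEN iffD2])
  moreover have "SPR_plus d IOb Ph W" using SR by (simp add: SR_def)
  ultimately have "sat IOb Ph W ((\<lambda>_. m0)(0 := h)) (\<lambda>_. 0) (light_formula d)"
    using light_formula_wf light_formula_free_body_vars m0 h unfolding SPR_plus_def by blast
  then show ?thesis by (rule sat_light_formula[OF d1, THEN iffD1])
qed

section \<open>Worldview transformations between inertial observers\<close>

context minkowski
begin

definition vec :: "'q::linordered_field list \<Rightarrow> nat \<Rightarrow> 'q" where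
  "vec x = (\<lambda>i. if i < d then x ! i else 0)"

definition lst :: "(nat \<Rightarrow> 'q::linordered_field) \<Rightarrow> 'q list" where
  "lst v = map v [0..<d]"

lemma vec_vecs [simp]: "vec x \<in> vecs" by (simp add: vec_def vecs_def)
lemma lst_vec [simp]: "length x = d \<Longrightarrow> lst (vec x) = x"
  by (auto simp: lst_def vec_def intro!: nth_equalityI)
lemma vec_lst [simp]: "v \<in> vecs \<Longrightarrow> vec (lst v) = v"
  by (rule vecs_eqI[OF vec_vecs]) (auto simp: lst_def vec_def)
lemma length_lst [simp]: "length (lst v) = d" by (simp add: lst_def)
lemma vec_inj: "length x = d \<Longrightarrow> length y = d \<Longrightarrow> vec x = vec y \<Longrightarrow> x = y"
  by (metis lst_vec)

lemma mquad_vec: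
  "0 < d \<Longrightarrow> length x = d \<Longrightarrow> length y = d \<Longrightarrow>
     mquad (vec x - vec y) = (time x y)^2 - space2 d x y"
  unfolding mquad_expand space2_def time_def by (simp add: vec_def)

end

locale inertial_observers = minkowski3 d for d +
  fixes IOb :: "'b \<Rightarrow> bool" and Ph :: "'b \<Rightarrow> 'b \<Rightarrow> bool"
    and W :: "'b \<Rightarrow> 'b \<Rightarrow> 'q::linordered_field list \<Rightarrow> bool" and m k :: 'b
  assumes SR: "SR d IOb Ph W" and m: "IOb m" and k: "IOb k"
begin

lemma d_pos: "0 < d" using three_le_d by simp

lemma photon_iff_lightlike:
  assumes "IOb h" "length x = d" "length y = d"
  shows "(\<exists>p b. Ph p b \<and> W h p x \<and> W h p y) \<longleftrightarrow> mquad (vec x - vec y) = 0"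
  using light_axiom_inertial[OF SR _ assms(1)] three_le_d mquad_vec[OF d_pos assms(2,3)] assms(2,3)
  by (auto simp: light_axiom_def)

(* Coordinates of an event are unique: distinct points have distinct light cones. *)
lemma event_coordinates_unique:
  assumes h: "IOb h" and y: "length y = d" and y': "length y' = d" and ev: "ev_eq W h y h y'"
  shows "y = y'"
proof -
  have "vec y - vec y' = 0"
  proof (rule light_cones_separate)
    fix n :: "nat \<Rightarrow> 'q" assume n: "n \<in> vecs" "mquad n = 0"
    define z where "z = lst (vec y - n)"
    have z: "length z = d" "vec z = vec y - n" using n by (simp_all add: z_def)
    then have "\<exists>p b. Ph p b \<and> W h p y \<and> W h p z" using photon_iff_lightlike[OF h y] n by simp
    then have "\<exists>p b. Ph p b \<and> W h p y' \<and> W h p z" using ev by (simp add: ev_eq_def)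
    then have "mquad (vec y' - vec z) = 0" using photon_iff_lightlike[OF h y' z(1)] by simp
    moreover have "vec y - vec y' - n = - (vec y' - vec z)" using z by simp
    ultimately show "mquad (vec y - vec y' - n) = 0" by (simp only: mquad_minus)
  qed (use three_le_d in auto)
  then show ?thesis using vec_inj[OF y y'] by simp
qed

definition wv :: "'q list \<Rightarrow> 'q list" where
  "wv x = (THE y. length y = d \<and> ev_eq W m x k y)"

lemma wv_spec:
  assumes x: "length x = d"
  shows "length (wv x) = d" and "ev_eq W m x k (wv x)"
proof -
  obtain y where y: "length y = d" "ev_eq W m x k y"
    using SR m k x unfolding SR_def AxEv_def by blast
  have "y' = y" if "length y' = d" "ev_eq W m x k y'" for y'
    using event_coordinates_unique[OF k that(1) y(1)] that(2) y(2) by (simp add: ev_eq_def)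
  then have "\<exists>!y. length y = d \<and> ev_eq W m x k y" using y by blast
  then have "length (wv x) = d \<and> ev_eq W m x k (wv x)" unfolding wv_def by (rule theI')
  then show "length (wv x) = d" and "ev_eq W m x k (wv x)" by simp_all
qed

lemma wv_unique: "length x = d \<Longrightarrow> length y = d \<Longrightarrow> ev_eq W m x k y \<Longrightarrow> wv x = y"
  using event_coordinates_unique[OF k] wv_spec by (simp add: ev_eq_def)

lemma wvt_graph: "wvt d W m k = {(x, wv x) | x. length x = d}"
  using wv_spec wv_unique by (auto simp: wvt_def)

lemma wv_inj: "length x = d \<Longrightarrow> length y = d \<Longrightarrow> wv x = wv y \<Longrightarrow> x = y"
  using event_coordinates_unique[OF m, of x y] wv_spec[of x] wv_spec[of y] by (simp add: ev_eq_def)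

lemma wv_surj:
  assumes y: "length y = d"
  shows "\<exists>x. length x = d \<and> wv x = y"
proof -
  obtain x where "length x = d" "ev_eq W k y m x"
    using SR m k y unfolding SR_def AxEv_def by blast
  then show ?thesis using wv_unique[of x y] y by (auto simp: ev_eq_def)
qed

definition wv_vec :: "(nat \<Rightarrow> 'q) \<Rightarrow> nat \<Rightarrow> 'q" where
  "wv_vec v = vec (wv (lst v))"

lemma wv_vec_vec: "length x = d \<Longrightarrow> wv_vec (vec x) = vec (wv x)"
  by (simp add: wv_vec_def)

lemma wv_light_cone_map: "light_cone_map d wv_vec"
proof
  fix x y :: "nat \<Rightarrow> 'q" assume x: "x \<in> vecs" and y: "y \<in> vecs"
  note fx = wv_spec[OF length_lst[of x]] and fy = wv_spec[OF length_lst[of y]]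
  show "x = y" if "wv_vec x = wv_vec y"
  proof -
    have "wv (lst x) = wv (lst y)" using that vec_inj[OF fx(1) fy(1)] by (simp add: wv_vec_def)
    then have "lst x = lst y" using wv_inj by simp
    then show "x = y" using vec_lst[OF x] vec_lst[OF y] by metis
  qed
  have "(\<exists>p b. Ph p b \<and> W m p (lst x) \<and> W m p (lst y))
      \<longleftrightarrow> (\<exists>p b. Ph p b \<and> W k p (wv (lst x)) \<and> W k p (wv (lst y)))"
    using fx(2) fy(2) by (simp add: ev_eq_def)
  then show "mquad (wv_vec x - wv_vec y) = 0 \<longleftrightarrow> mquad (x - y) = 0"
    using photon_iff_lightlike[OF m] photon_iff_lightlike[OF k] fx(1) fy(1) x y
    by (simp add: wv_vec_def)
  assume t: "x 0 = y 0" "wv_vec x 0 = wv_vec y 0"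
  then have "lst x ! 0 = lst y ! 0" "wv (lst x) ! 0 = wv (lst y) ! 0"
    using d_pos by (simp_all add: lst_def wv_vec_def vec_def)
  then have "space2 d (lst x) (lst y) = space2 d (wv (lst x)) (wv (lst y))"
    using SR m k fx fy unfolding SR_def AxSymD_def by (meson length_lst)
  moreover have "time (lst x) (lst y) = 0" "time (wv (lst x)) (wv (lst y)) = 0"
    using \<open>lst x ! 0 = lst y ! 0\<close> \<open>wv (lst x) ! 0 = wv (lst y) ! 0\<close> by (simp_all add: time_def)
  ultimately show "mquad (wv_vec x - wv_vec y) = mquad (x - y)"
    using mquad_vec[OF d_pos, of "lst x" "lst y"] mquad_vec[OF d_pos, of "wv (lst x)" "wv (lst y)"]
      fx(1) fy(1) vec_lst[OF x] vec_lst[OF y] by (simp add: wv_vec_def)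
next
  fix z :: "nat \<Rightarrow> 'q" assume z: "z \<in> vecs"
  obtain x where "length x = d" "wv x = lst z" using wv_surj[of "lst z"] by auto
  then have "wv_vec (vec x) = z" using wv_vec_vec z by simp
  then show "\<exists>x\<in>vecs. wv_vec x = z" using vec_vecs by blast
qed (simp add: wv_vec_def)

sublocale wv_map: light_cone_map d wv_vec
  by (rule wv_light_cone_map)

lemma wv_affine: "affine_map d wv"
  unfolding affine_map_def
proof (intro exI allI impI)
  fix x :: "'q list" assume x: "length x = d"
  have "wv x = lst (wv_vec (vec x))" using wv_spec(1)[OF x] x by (simp add: wv_vec_def)
  also have "\<dots> = map (\<lambda>i. wv_vec 0 i + (\<Sum>j<d. wv_map.lin (basis j) i * x ! j)) [0..<d]"
    unfolding wv_map.light_cone_map_affine[OF vec_vecs] lst_def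
    by (intro map_cong refl) (auto simp: sum_fun_apply vec_def mult.commute intro!: sum.cong)
  finally show "wv x = map (\<lambda>i. wv_vec 0 i + (\<Sum>j<d. (\<lambda>i j. wv_map.lin (basis j) i) i j * x ! j)) [0..<d]"
    by simp
qed

lemma wv_bij: "bij_betw wv {x. length x = d} {x. length x = d}"
  unfolding bij_betw_def inj_on_def using wv_inj wv_spec(1) wv_surj by fastforce

lemma wv_interval:
  assumes "length x = d" "length y = d"
  shows "(time x y)^2 - space2 d x y = (time (wv x) (wv y))^2 - space2 d (wv x) (wv y)"
  using wv_map.light_cone_map_isometry[of "vec x" "vec y"] assms wv_spec(1)[of x] wv_spec(1)[of y]
    mquad_vec[OF d_pos, of x y] mquad_vec[OF d_pos, of "wv x" "wv y"]
  by (simp add: wv_vec_vec)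

theorem wv_poincare: "poincare d wv"
  unfolding poincare_def using wv_affine wv_bij wv_interval by blast

end

theorem corollary3p6:
  fixes d :: nat
    and IOb :: "'b \<Rightarrow> bool"
    and Ph :: "'b \<Rightarrow> 'b \<Rightarrow> bool"
    and W :: "'b \<Rightarrow> 'b \<Rightarrow> 'q::linordered_field list \<Rightarrow> bool"
    and m k :: 'b
  assumes "d \<ge> 3"
    and "SR d IOb Ph W"
    and "IOb m" and "IOb k"
  shows "\<exists>P. poincare d P \<and> wvt d W m k = {(x, P x) | x. length x = d}"
proof -
  interpret inertial_observers d IOb Ph W m k
    by unfold_locales (use assms in auto)
  show ?thesis using wv_poincare wvt_graph by blast
qed
end
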